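(* Let $C$ be a ring with vertices $v_0,\dots,v_{n-1}$ ($n\ge 3$), edges $e_i=(v_i,v_{i+1})$ for $i\in\{0,\dots,n-2\}$ and $e_{n-1}=(v_{n-1},v_0)$, positive edge weights $w$, and homebase $v_0$, and let $q\ge 0$ be the invoking cost. For each $i\in\{0,\dots,n-1\}$ let $C_i=C\setminus e_i$ (a path). For $i\in\{1,\dots,n-2\}$ let $v_i^{\min}$ (resp. $v_i^{\max}$) be the vertex among $v_i,v_{i+1}$ whose distance $d_{C_i}(v_0,\cdot)$ in $C_i$ is smaller (resp. larger). Set $c_0=q+w(C_0)$, $c_{n-1}=q+w(C_{n-1})$, and for $i\in\{1,\dots,n-2\}$ set $c_i=\min\{2q+w(C_i),\; q+d_{C_i}(v_0,v_i^{\min})+w(C_i)\}$. Let $i^*$ be an index minimizing $c_i$. Define the strategy $\mathcal{S}$ (procedure RingOffline) as follows: invoke an agent $a_1$ at $v_0$; if $i^*=0$, $a_1$ traverses the path $C_0$ from $v_0$ to $v_1$; if $i^*=n-1$, $a_1$ traverses the path $C_{n-1}$ from $v_0$ to $v_{n-1}$; if $1\le i^*\le n-2$ and $2q+w(C_{i^*})<q+d_{C_{i^*}}(v_0,v^{\min}_{i^*})+w(C_{i^*})$, then $a_1$ traverses the path in $C_{i^*}$ from $v_0$ to $v^{\min}_{i^*}$, a second agent $a_2$ is invoked at $v_0$ and traverses the path in $C_{i^*}$ from $v_0$ to $v^{\max}_{i^*}$; otherwise (with $1\le i^*\le n-2$) $a_1$ traverses the path in $C_{i^*}$ from $v_0$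 to $v^{\min}_{i^*}$ and then the path in $C_{i^*}$ from $v^{\min}_{i^*}$ to $v^{\max}_{i^*}$. Then $\mathcal{S}$ explores $C$ and is cost-optimal, i.e., its cost is minimum among all strategies exploring $C$.
   Context: Exploration model: a connected undirected graph with positive edge weights $w$ and a designated homebase vertex is given, together with an invoking cost $q\ge 0$. A strategy is a finite sequence of moves, each either (1) invoking a new agent, which appears at the homebase, or (2) an agent traversing an edge incident to its current vertex. A vertex is explored when it is visited for the first time; a strategy explores the graph if every vertex is visited by at least one agent (agents need not return to the homebase). If a strategy uses $k$ agents and agent $i$ traverses a total distance $d_i$ (sum of weights of the edges it traverses, with multiplicity), its cost is $kq+\sum_{i=1}^k d_i$. A strategy is cost-optimal (off-line setting, graph known in advance) if it explores the graph with minimum cost. For a subgraph $H$, $w(H)$ is the sum of the weights of its edges; $d_H(u,v)$ is the weighted shortest-path distance in $H$. *)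

theory Defs
  imports Main "HOL-Library.Extended_Real"
begin

text \<open>An undirected weighted graph is given by an edge set E (two-element vertex sets)
and a weight function W on edges. A move either invokes a new agent (which appears
at the homebase h) or lets agent j (0-based index, in order of invocation) traverse
the edge from its current vertex to the adjacent vertex v.\<close>

datatype 'a move = Invoke | Traverse nat 'a

text \<open>Execution state: positions of the invoked agents, accumulated cost, visited vertices.\<close>
type_synonym 'a xstate = "'a list \<times> real \<times> 'a set"

fun step :: "'a set set \<Rightarrow> ('a set \<Rightarrow> real) \<Rightarrow> 'a \<Rightarrow> real \<Rightarrow> 'a xstate \<Rightarrow> 'a move \<Rightarrow> 'a xstate option" where
  "step E W h q (pos, c, vis) Invoke = Some (pos @ [h], c + q, insert h vis)"
| "step E W h q (pos, c, vis) (Traverse j v) =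
     (if j < length pos \<and> {pos ! j, v} \<in> E
      then Some (pos[j := v], c + W {pos ! j, v}, insert v vis) else None)"

fun exec :: "'a set set \<Rightarrow> ('a set \<Rightarrow> real) \<Rightarrow> 'a \<Rightarrow> real \<Rightarrow> 'a xstate \<Rightarrow> 'a move list \<Rightarrow> 'a xstate option" where
  "exec E W h q st [] = Some st"
| "exec E W h q st (m # ms) = (case step E W h q st m of None \<Rightarrow> None | Some st' \<Rightarrow> exec E W h q st' ms)"

definition run :: "'a set set \<Rightarrow> ('a set \<Rightarrow> real) \<Rightarrow> 'a \<Rightarrow> real \<Rightarrow> 'a move list \<Rightarrow> 'a xstate option" where
  "run E W h q S = exec E W h q ([], 0, {}) S"

definition explores :: "'a set \<Rightarrow> 'a set set \<Rightarrow> ('a set \<Rightarrow> real) \<Rightarrow> 'a \<Rightarrow> real \<Rightarrow> 'a move list \<Rightarrow> bool" where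
  "explores V E W h q S \<longleftrightarrow> (\<exists>pos c vis. run E W h q S = Some (pos, c, vis) \<and> V \<subseteq> vis)"

text \<open>Cost = k q + total distance travelled (accumulated move by move).\<close>
definition strat_cost :: "'a set set \<Rightarrow> ('a set \<Rightarrow> real) \<Rightarrow> 'a \<Rightarrow> real \<Rightarrow> 'a move list \<Rightarrow> real" where
  "strat_cost E W h q S = (case run E W h q S of Some (pos, c, vis) \<Rightarrow> c | None \<Rightarrow> 0)"

definition cost_optimal :: "'a set \<Rightarrow> 'a set set \<Rightarrow> ('a set \<Rightarrow> real) \<Rightarrow> 'a \<Rightarrow> real \<Rightarrow> 'a move list \<Rightarrow> bool" where
  "cost_optimal V E W h q S \<longleftrightarrow> explores V E W h q S \<and>
     (\<forall>S'. explores V E W h q S' \<longrightarrow> strat_cost E W h q S \<le> strat_cost E W h q S')"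

definition wsub :: "('a set \<Rightarrow> real) \<Rightarrow> 'a set set \<Rightarrow> real" where
  "wsub W H = (\<Sum>e\<in>H. W e)"

definition is_walk :: "'a set set \<Rightarrow> 'a list \<Rightarrow> bool" where
  "is_walk H xs \<longleftrightarrow> xs \<noteq> [] \<and> (\<forall>k. Suc k < length xs \<longrightarrow> {xs ! k, xs ! Suc k} \<in> H)"

definition walk_len :: "('a set \<Rightarrow> real) \<Rightarrow> 'a list \<Rightarrow> real" where
  "walk_len W xs = (\<Sum>k<length xs - 1. W {xs ! k, xs ! Suc k})"

definition gdist :: "'a set set \<Rightarrow> ('a set \<Rightarrow> real) \<Rightarrow> 'a \<Rightarrow> 'a \<Rightarrow> real" where
  "gdist H W u v = Inf {walk_len W xs | xs. is_walk H xs \<and> hd xs = u \<and> last xs = v}"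

text \<open>Vertices 0..n-1, edge e_i = {i, (i+1) mod n} with weight w i, homebase 0.\<close>
definition ring_edge :: "nat \<Rightarrow> nat \<Rightarrow> nat set" where
  "ring_edge n i = {i, Suc i mod n}"

definition ring_edges :: "nat \<Rightarrow> nat set set" where
  "ring_edges n = ring_edge n ` {..<n}"

definition ring_W :: "nat \<Rightarrow> (nat \<Rightarrow> real) \<Rightarrow> nat set \<Rightarrow> real" where
  "ring_W n w e = (\<Sum>i | i < n \<and> ring_edge n i = e. w i)"

definition Cpath :: "nat \<Rightarrow> nat \<Rightarrow> nat set set" where
  "Cpath n i = ring_edges n - {ring_edge n i}"

definition dC :: "nat \<Rightarrow> (nat \<Rightarrow> real) \<Rightarrow> nat \<Rightarrow> nat \<Rightarrow> real" where
  "dC n w i v = gdist (Cpath n i) (ring_W n w) 0 v"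

definition wC :: "nat \<Rightarrow> (nat \<Rightarrow> real) \<Rightarrow> nat \<Rightarrow> real" where
  "wC n w i = wsub (ring_W n w) (Cpath n i)"

text \<open>v_i^min / v_i^max (ties resolved in favour of v_i as v^min).\<close>
definition vmin :: "nat \<Rightarrow> (nat \<Rightarrow> real) \<Rightarrow> nat \<Rightarrow> nat" where
  "vmin n w i = (if dC n w i i \<le> dC n w i (Suc i) then i else Suc i)"

definition vmax :: "nat \<Rightarrow> (nat \<Rightarrow> real) \<Rightarrow> nat \<Rightarrow> nat" where
  "vmax n w i = (if dC n w i i \<le> dC n w i (Suc i) then Suc i else i)"

definition ccost :: "nat \<Rightarrow> (nat \<Rightarrow> real) \<Rightarrow> real \<Rightarrow> nat \<Rightarrow> real" where
  "ccost n w q i = (if i = 0 \<or> i = n - 1 then q + wC n w i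
     else min (2 * q + wC n w i) (q + dC n w i (vmin n w i) + wC n w i))"

definition trav :: "nat \<Rightarrow> nat list \<Rightarrow> nat move list" where
  "trav j vs = map (Traverse j) vs"

text \<open>Vertex sequence (excluding the start) of the path in C_i (1 \<le> i \<le> n-2) from v_0 to v:
  to v_i it is 1,2,...,i; to v_{i+1} it is n-1, n-2, ..., i+1.\<close>
definition path_from0 :: "nat \<Rightarrow> nat \<Rightarrow> nat \<Rightarrow> nat list" where
  "path_from0 n i v = (if v = i then [1..<Suc i] else rev [Suc i..<n])"

text \<open>Vertex sequence (excluding the start) of the path in C_i from u to the other endpoint
  of e_i (u \<in> {v_i, v_{i+1}}).\<close>
definition path_between :: "nat \<Rightarrow> nat \<Rightarrow> nat \<Rightarrow> nat list" where
  "path_between n i u = (if u = i then rev [0..<i] @ rev [Suc i..<n]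
                         else [Suc (Suc i)..<n] @ [0..<Suc i])"

definition RingOffline :: "nat \<Rightarrow> (nat \<Rightarrow> real) \<Rightarrow> real \<Rightarrow> nat \<Rightarrow> nat move list" where
  "RingOffline n w q istar =
    (if istar = 0 then Invoke # trav 0 (rev [1..<n])
     else if istar = n - 1 then Invoke # trav 0 [1..<n]
     else if 2 * q + wC n w istar < q + dC n w istar (vmin n w istar) + wC n w istar
     then (Invoke # trav 0 (path_from0 n istar (vmin n w istar)))
          @ (Invoke # trav 1 (path_from0 n istar (vmax n w istar)))
     else (Invoke # trav 0 (path_from0 n istar (vmin n w istar)))
          @ trav 0 (path_between n istar (vmin n w istar)))"

end

theory Submission
  imports Defs
begin

text \<open>Lift the ring to its universal cover, the real line, on which vertex \<open>v\<close> sits at the points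
  \<open>coord v + z L\<close> (\<open>z \<in> \<int>\<close>, \<open>L = w(C)\<close>). The lifted walks of all agents start at 0 and stay in an
  interval \<open>[lo, hi]\<close> containing a lift of every explored vertex; a strategy with \<open>k\<close> agents pays
  at least \<open>k q + (hi - lo)\<close>, and with a single agent ending at \<open>p\<close> at least \<open>q + 2 (hi - lo) - |p|\<close>.
  If every vertex has a lift in \<open>[lo, hi]\<close>, then for some \<open>j\<close> the interval contains both
  \<open>coord j\<close> and \<open>coord (j + 1) - L\<close>, i.e. the lifted walks cover the path \<open>C_j\<close>; this forces cost
  at least \<open>c_j \<ge> c_{i*}\<close>. Conversely, the walks used by RingOffline have exactly the lengths
  entering \<open>c_{i*}\<close>, the distances in \<open>C_i\<close> being certified by a 1-Lipschitz potential.\<close>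

lemma sum_list_list_update:
  "k < length xs \<Longrightarrow> sum_list (xs[k := x]) = sum_list xs - xs ! k + (x :: 'a :: ab_group_add)"
  by (induction xs arbitrary: k) (auto split: nat.split)

section \<open>Walks\<close>

fun walk_weight :: "('a set \<Rightarrow> real) \<Rightarrow> 'a list \<Rightarrow> real" where
  "walk_weight W (x # y # zs) = W {x, y} + walk_weight W (y # zs)"
| "walk_weight W _ = 0"

fun walk_in :: "'a set set \<Rightarrow> 'a list \<Rightarrow> bool" where
  "walk_in H (x # y # zs) \<longleftrightarrow> {x, y} \<in> H \<and> walk_in H (y # zs)"
| "walk_in H _ \<longleftrightarrow> True"

lemma walk_len_eq_walk_weight: "walk_len W xs = walk_weight W xs"
proof (induction W xs rule: walk_weight.induct)
  case (1 W x y zs)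
  have "walk_len W (x # y # zs) = W {x, y} + walk_len W (y # zs)"
    unfolding walk_len_def by (simp add: sum.lessThan_Suc_shift del: sum.lessThan_Suc)
  then show ?case using 1 by simp
qed (auto simp: walk_len_def)

lemma is_walk_iff_walk_in: "is_walk H xs \<longleftrightarrow> xs \<noteq> [] \<and> walk_in H xs"
proof (induction H xs rule: walk_in.induct)
  case (1 H x y zs)
  have "is_walk H (x # y # zs) \<longleftrightarrow> {x, y} \<in> H \<and> is_walk H (y # zs)"
    unfolding is_walk_def by (auto simp: less_Suc_eq_0_disj)
  then show ?case using 1 by simp
qed (auto simp: is_walk_def)

lemma walk_weight_append:
  "xs \<noteq> [] \<Longrightarrow> ys \<noteq> [] \<Longrightarrow>
     walk_weight W (xs @ ys) = walk_weight W xs + W {last xs, hd ys} + walk_weight W ys"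
  by (induction W xs rule: walk_weight.induct) (auto simp: neq_Nil_conv)

lemma walk_in_append:
  "xs \<noteq> [] \<Longrightarrow> ys \<noteq> [] \<Longrightarrow>
     walk_in H (xs @ ys) \<longleftrightarrow> walk_in H xs \<and> {last xs, hd ys} \<in> H \<and> walk_in H ys"
  by (induction H xs rule: walk_in.induct) (auto simp: neq_Nil_conv)

lemma walk_weight_rev: "walk_weight W (rev xs) = walk_weight W xs"
proof (induction W xs rule: walk_weight.induct)
  case (1 W x y zs)
  have "walk_weight W (rev (y # zs) @ [x]) = walk_weight W (rev (y # zs)) + W {y, x}"
    by (subst walk_weight_append) (auto simp: last_rev)
  then show ?case using 1 by (simp only: rev.simps(2) walk_weight.simps insert_commute)
qed auto

lemma walk_in_rev: "walk_in H (rev xs) \<longleftrightarrow> walk_in H xs"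
proof (induction H xs rule: walk_in.induct)
  case (1 H x y zs)
  have "walk_in H (rev (y # zs) @ [x]) \<longleftrightarrow> walk_in H (rev (y # zs)) \<and> {y, x} \<in> H"
    by (subst walk_in_append) (auto simp: last_rev)
  then show ?case using 1 by (simp only: rev.simps(2) walk_in.simps insert_commute) blast
qed auto

lemma walk_in_mono: "H \<subseteq> H' \<Longrightarrow> walk_in H xs \<Longrightarrow> walk_in H' xs"
  by (induction H xs rule: walk_in.induct) auto

lemma walk_in_upt:
  "(\<And>t. a \<le> t \<Longrightarrow> t < b \<Longrightarrow> {t, Suc t} \<in> H) \<Longrightarrow> walk_in H [a..<Suc b]"
proof (induction b)
  case (Suc b)
  show ?case
  proof (cases "a \<le> b")
    case True
    then have "[a..<Suc (Suc b)] = [a..<Suc b] @ [Suc b]" by simp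
    then show ?thesis using True Suc by (simp add: walk_in_append del: upt_Suc)
  qed simp
qed simp

lemma potential_diff_le_walk_weight:
  assumes "\<And>u v. {u, v} \<in> H \<Longrightarrow> \<bar>f u - f v\<bar> \<le> W {u, v}"
  shows "walk_in H xs \<Longrightarrow> xs \<noteq> [] \<Longrightarrow> \<bar>f (last xs) - f (hd xs)\<bar> \<le> walk_weight W xs"
proof (induction xs rule: induct_list012)
  case (3 x y zs)
  have "\<bar>f y - f x\<bar> \<le> W {x, y}" using assms[of x y] 3 by (simp add: abs_minus_commute)
  moreover have "\<bar>f (last (y # zs)) - f y\<bar> \<le> walk_weight W (y # zs)" using 3 by simp
  ultimately show ?case by simp
qed auto

lemma gdist_eq_potential_diff:
  assumes lipschitz: "\<And>x y. {x, y} \<in> H \<Longrightarrow> \<bar>f x - f y\<bar> \<le> W {x, y}"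
    and walk: "walk_in H xs" "xs \<noteq> []" "hd xs = u" "last xs = v"
    and tight: "walk_weight W xs = \<bar>f v - f u\<bar>"
  shows "gdist H W u v = \<bar>f v - f u\<bar>"
  unfolding gdist_def
proof (rule cInf_eq_minimum)
  show "\<bar>f v - f u\<bar> \<in> {walk_len W xs |xs. is_walk H xs \<and> hd xs = u \<and> last xs = v}"
    using walk tight by (auto simp: walk_len_eq_walk_weight is_walk_iff_walk_in intro!: exI[of _ xs])
next
  fix d assume "d \<in> {walk_len W xs |xs. is_walk H xs \<and> hd xs = u \<and> last xs = v}"
  then show "\<bar>f v - f u\<bar> \<le> d"
    using potential_diff_le_walk_weight[of H f W, OF lipschitz]
    by (auto simp: walk_len_eq_walk_weight is_walk_iff_walk_in)
qed

lemma exec_append: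
  "exec E W h q st (xs @ ys) =
     (case exec E W h q st xs of None \<Rightarrow> None | Some st' \<Rightarrow> exec E W h q st' ys)"
  by (induction xs arbitrary: st) (auto split: option.split)

lemma exec_trav:
  "j < length pos \<Longrightarrow> walk_in E (pos ! j # vs) \<Longrightarrow>
   exec E W h q (pos, c, vis) (trav j vs) =
     Some (pos[j := last (pos ! j # vs)], c + walk_weight W (pos ! j # vs), vis \<union> set vs)"
proof (induction vs arbitrary: pos c vis)
  case (Cons v vs)
  then show ?case
    using Cons.IH[of "pos[j := v]" "c + W {pos ! j, v}" "insert v vis"]
    by (simp add: trav_def add.assoc)
qed (simp add: trav_def)

lemma exec_Invoke_trav:
  "walk_in E (h # vs) \<Longrightarrow>
   exec E W h q (pos, c, vis) (Invoke # trav (length pos) vs) =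
     Some (pos @ [last (h # vs)], c + q + walk_weight W (h # vs), insert h vis \<union> set vs)"
  using exec_trav[of "length pos" "pos @ [h]" E vs W h q "c + q" "insert h vis"] by simp

section \<open>The weighted ring\<close>

locale weighted_ring =
  fixes n :: nat and w :: "nat \<Rightarrow> real"
  assumes three_le: "3 \<le> n" and weight_pos: "\<And>i. i < n \<Longrightarrow> 0 < w i"
begin

abbreviation E :: "nat set set" where "E \<equiv> ring_edges n"
abbreviation W :: "nat set \<Rightarrow> real" where "W \<equiv> ring_W n w"

definition coord :: "nat \<Rightarrow> real" where
  "coord v = (\<Sum>t<v. w t)"

abbreviation L :: real where "L \<equiv> coord n"

lemma coord_0 [simp]: "coord 0 = 0"
  and coord_Suc [simp]: "coord (Suc v) = coord v + w v"
  by (simp_all add: coord_def)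

lemma coord_mono: "a \<le> b \<Longrightarrow> b \<le> n \<Longrightarrow> coord a \<le> coord b"
  unfolding coord_def by (rule sum_mono2) (auto intro!: less_imp_le weight_pos)

lemma coord_nonneg: "v \<le> n \<Longrightarrow> 0 \<le> coord v"
  using coord_mono[of 0 v] by simp

lemma L_eq_last: "L = coord (n - 1) + w (n - 1)"
  using three_le coord_Suc[of "n - 1"] by simp

lemma ring_edge_Suc: "Suc i < n \<Longrightarrow> ring_edge n i = {i, Suc i}"
  and ring_edge_last: "ring_edge n (n - 1) = {n - 1, 0}"
  using three_le by (simp_all add: ring_edge_def)

lemma ring_edge_cases:
  assumes "t < n"
  obtains "Suc t < n" "ring_edge n t = {t, Suc t}" | "t = n - 1" "ring_edge n t = {n - 1, 0}"
  using assms ring_edge_Suc ring_edge_last by (cases "Suc t < n") auto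

lemma inj_on_ring_edge: "inj_on (ring_edge n) {..<n}"
  using three_le by (auto simp: inj_on_def ring_edge_def doubleton_eq_iff mod_Suc split: if_splits)

lemma ring_W_ring_edge: "i < n \<Longrightarrow> W (ring_edge n i) = w i"
proof -
  assume "i < n"
  then have "{i'. i' < n \<and> ring_edge n i' = ring_edge n i} = {i}"
    using inj_on_ring_edge by (auto simp: inj_on_def)
  then show ?thesis by (simp add: ring_W_def)
qed

lemma ring_edge_in_Cpath: "i < n \<Longrightarrow> j < n \<Longrightarrow> ring_edge n i \<in> Cpath n j \<longleftrightarrow> i \<noteq> j"
  using inj_on_ring_edge by (auto simp: Cpath_def ring_edges_def inj_on_def)

lemma Cpath_subset: "Cpath n j \<subseteq> E"
  by (simp add: Cpath_def)

lemma wC_eq: "j < n \<Longrightarrow> wC n w j = L - w j"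
proof -
  assume j: "j < n"
  have "Cpath n j = ring_edge n ` ({..<n} - {j})"
    using j inj_on_ring_edge by (simp add: Cpath_def ring_edges_def inj_on_image_set_diff)
  then have "wC n w j = (\<Sum>i\<in>{..<n} - {j}. W (ring_edge n i))"
    using inj_on_ring_edge by (simp add: wC_def wsub_def sum.reindex inj_on_diff)
  also have "\<dots> = (\<Sum>i\<in>{..<n} - {j}. w i)"
    by (rule sum.cong) (auto simp: ring_W_ring_edge)
  finally show ?thesis using j by (simp add: sum_diff1 coord_def)
qed

lemma W_Suc: "Suc t < n \<Longrightarrow> W {t, Suc t} = w t"
  using ring_W_ring_edge[of t] ring_edge_Suc[of t] by simp

lemma W_wrap_edge: "W {n - 1, 0} = w (n - 1)"
  using ring_W_ring_edge[of "n - 1"] ring_edge_last three_le by simp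

lemma walk_weight_upt: "a \<le> b \<Longrightarrow> b < n \<Longrightarrow> walk_weight W [a..<Suc b] = coord b - coord a"
proof (induction b)
  case (Suc b)
  show ?case
  proof (cases "a \<le> b")
    case True
    then have "[a..<Suc (Suc b)] = [a..<Suc b] @ [Suc b]" by simp
    then show ?thesis using True Suc by (simp add: walk_weight_append W_Suc del: upt_Suc)
  next
    case False
    then have "a = Suc b" using Suc.prems by simp
    then show ?thesis by simp
  qed
qed auto

lemma Suc_edge_in_Cpath: "Suc t < n \<Longrightarrow> t \<noteq> i \<Longrightarrow> i < n \<Longrightarrow> {t, Suc t} \<in> Cpath n i"
  using ring_edge_in_Cpath[of t i] ring_edge_Suc[of t] by simp

lemma wrap_edge_in_Cpath: "i < n - 1 \<Longrightarrow> {n - 1, 0} \<in> Cpath n i"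
  using ring_edge_in_Cpath[of "n - 1" i] ring_edge_last by simp

lemma walk_up:
  assumes "i < n"
  shows "walk_in (Cpath n i) [0..<Suc i]" "walk_weight W [0..<Suc i] = coord i"
  using assms by (auto intro!: walk_in_upt Suc_edge_in_Cpath simp: walk_weight_upt simp del: upt_Suc)

lemma walk_to_last:
  assumes "Suc i < n"
  shows "walk_in (Cpath n i) [Suc i..<n]" "walk_weight W [Suc i..<n] = coord (n - 1) - coord (Suc i)"
    "[Suc i..<n] \<noteq> []" "last [Suc i..<n] = n - 1"
proof -
  have eq: "[Suc i..<n] = [Suc i..<Suc (n - 1)]" using assms by simp
  show "walk_in (Cpath n i) [Suc i..<n]"
    unfolding eq by (rule walk_in_upt) (use assms in \<open>auto intro!: Suc_edge_in_Cpath\<close>)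
  show "walk_weight W [Suc i..<n] = coord (n - 1) - coord (Suc i)"
    unfolding eq by (rule walk_weight_upt) (use assms in simp_all)
qed (use assms in simp_all)

lemma walk_down:
  assumes "Suc i < n"
  shows "walk_in (Cpath n i) (0 # rev [Suc i..<n])"
    "walk_weight W (0 # rev [Suc i..<n]) = L - coord (Suc i)"
proof -
  have rev: "0 # rev [Suc i..<n] = rev ([Suc i..<n] @ [0])" by simp
  show "walk_in (Cpath n i) (0 # rev [Suc i..<n])"
    unfolding rev walk_in_rev using walk_to_last[OF assms] wrap_edge_in_Cpath[of i] assms
    by (simp add: walk_in_append)
  show "walk_weight W (0 # rev [Suc i..<n]) = L - coord (Suc i)"
    unfolding rev walk_weight_rev using walk_to_last[OF assms] assms L_eq_last W_wrap_edge
    by (simp add: walk_weight_append)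
qed

lemma walk_around:
  assumes "Suc i < n"
  shows "walk_in (Cpath n i) ([Suc i..<n] @ [0..<Suc i])"
    "walk_weight W ([Suc i..<n] @ [0..<Suc i]) = L - w i"
  using walk_to_last[OF assms] wrap_edge_in_Cpath[of i] assms L_eq_last W_wrap_edge walk_up[of i]
  by (simp_all add: walk_in_append walk_weight_append hd_upt del: upt_Suc)

text \<open>The position of \<open>v\<close> on the path \<open>C_i\<close> laid out on the line with \<open>v_0\<close> at 0: vertices past
  the removed edge \<open>e_i\<close> are reached the other way round and get negative coordinates.\<close>

definition cut_coord :: "nat \<Rightarrow> nat \<Rightarrow> real" where
  "cut_coord i v = (if v \<le> i then coord v else coord v - L)"

lemma cut_coord_lipschitz:
  assumes "i < n" "{u, v} \<in> Cpath n i"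
  shows "\<bar>cut_coord i u - cut_coord i v\<bar> \<le> W {u, v}"
proof -
  obtain t where t: "t < n" "t \<noteq> i" "{u, v} = ring_edge n t"
    using assms(2) by (auto simp: Cpath_def ring_edges_def)
  then have W: "W {u, v} = w t" by (simp add: ring_W_ring_edge)
  from t(1) show ?thesis
  proof (cases rule: ring_edge_cases)
    case 1
    then show ?thesis using t W weight_pos[of t]
      by (auto simp: doubleton_eq_iff cut_coord_def)
  next
    case 2
    then show ?thesis using t W assms(1) L_eq_last weight_pos[of "n - 1"] three_le
      by (auto simp: doubleton_eq_iff cut_coord_def)
  qed
qed

lemma dC_at_i: "Suc i < n \<Longrightarrow> dC n w i i = coord i"
  using gdist_eq_potential_diff[where f = "cut_coord i" and xs = "[0..<Suc i]"]
    cut_coord_lipschitz[of i] walk_up[of i] coord_nonneg[of i]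
  by (simp add: dC_def cut_coord_def hd_upt del: upt_Suc)

lemma dC_at_Suc_i: "Suc i < n \<Longrightarrow> dC n w i (Suc i) = L - coord (Suc i)"
proof -
  assume i: "Suc i < n"
  have "dC n w i (Suc i) = \<bar>cut_coord i (Suc i) - cut_coord i 0\<bar>"
    unfolding dC_def
    by (rule gdist_eq_potential_diff[where xs = "0 # rev [Suc i..<n]"])
       (use i cut_coord_lipschitz[of i] walk_down[OF i] coord_mono[of "Suc i" n] in
         \<open>auto simp: cut_coord_def last_rev hd_upt\<close>)
  then show ?thesis using i coord_mono[of "Suc i" n] by (simp add: cut_coord_def)
qed

subsection \<open>RingOffline achieves \<open>c_{i*}\<close>\<close>

definition explores_within :: "real \<Rightarrow> nat move list \<Rightarrow> real \<Rightarrow> bool" where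
  "explores_within q S c \<longleftrightarrow>
     (\<exists>pos c' vis. run E W 0 q S = Some (pos, c', vis) \<and> {..<n} \<subseteq> vis \<and> c' \<le> c)"

lemma explores_within_single_walk:
  assumes "walk_in E (0 # vs)" "{..<n} \<subseteq> insert 0 (set vs)" "q + walk_weight W (0 # vs) \<le> c"
  shows "explores_within q (Invoke # trav 0 vs) c"
  using exec_Invoke_trav[of E 0 vs W q "[]" 0 "{}"] assms by (auto simp: explores_within_def run_def)

lemma RingOffline_first: "explores_within q (RingOffline n w q 0) (ccost n w q 0)"
proof -
  have n: "Suc 0 < n" using three_le by simp
  have "explores_within q (Invoke # trav 0 (rev [Suc 0..<n])) (q + wC n w 0)"
    using walk_down[OF n] walk_in_mono[OF Cpath_subset] wC_eq[of 0] n
    by (intro explores_within_single_walk) auto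
  then show ?thesis by (simp add: RingOffline_def ccost_def)
qed

lemma RingOffline_last: "explores_within q (RingOffline n w q (n - 1)) (ccost n w q (n - 1))"
proof -
  have n: "n - 1 < n" "0 # [Suc 0..<n] = [0..<Suc (n - 1)]"
    using three_le by (simp_all add: upt_conv_Cons del: upt_Suc)
  have "explores_within q (Invoke # trav 0 [Suc 0..<n]) (q + wC n w (n - 1))"
    using walk_up[OF n(1)] walk_in_mono[OF Cpath_subset] wC_eq[OF n(1)] L_eq_last
    by (intro explores_within_single_walk) (auto simp: n(2) simp del: upt_Suc)
  then show ?thesis using three_le by (simp add: RingOffline_def ccost_def)
qed

lemma walk_path_from0:
  assumes "Suc i < n" "v = i \<or> v = Suc i"
  shows "walk_in (Cpath n i) (0 # path_from0 n i v)"
    "walk_weight W (0 # path_from0 n i v) = dC n w i v"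
    "last (0 # path_from0 n i v) = v"
proof -
  have "walk_in (Cpath n i) (0 # path_from0 n i v) \<and>
      walk_weight W (0 # path_from0 n i v) = dC n w i v \<and> last (0 # path_from0 n i v) = v"
    using assms(2)
  proof
    assume v: "v = i"
    have "0 # path_from0 n i i = [0..<Suc i]"
      by (simp add: path_from0_def upt_conv_Cons del: upt_Suc)
    then show ?thesis
      using v assms(1) walk_up[of i] dC_at_i[of i] by (simp del: upt_Suc)
  next
    assume v: "v = Suc i"
    have "0 # path_from0 n i (Suc i) = 0 # rev [Suc i..<n]" by (simp add: path_from0_def)
    then show ?thesis
      using v assms(1) walk_down[of i] dC_at_Suc_i[of i] by (simp add: last_rev hd_upt)
  qed
  then show "walk_in (Cpath n i) (0 # path_from0 n i v)"
    "walk_weight W (0 # path_from0 n i v) = dC n w i v"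
    "last (0 # path_from0 n i v) = v"
    by auto
qed

lemma path_from0_cover: "{..<n} \<subseteq> insert 0 (set (path_from0 n i i) \<union> set (path_from0 n i (Suc i)))"
  by (auto simp: path_from0_def)

lemma walk_path_between:
  assumes "Suc i < n" "u = i \<or> u = Suc i"
  shows "walk_in (Cpath n i) (u # path_between n i u)"
    "walk_weight W (u # path_between n i u) = wC n w i"
    "{..<n} \<subseteq> insert u (set (path_between n i u))"
proof -
  have "walk_in (Cpath n i) (u # path_between n i u) \<and> walk_weight W (u # path_between n i u) = wC n w i"
    using assms(2)
  proof
    assume u: "u = i"
    have "i # path_between n i i = rev ([Suc i..<n] @ [0..<Suc i])"
      by (simp add: path_between_def)
    then show ?thesis
      using u assms(1) walk_around[of i] wC_eq[of i] by (simp only: walk_in_rev walk_weight_rev)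
  next
    assume u: "u = Suc i"
    have "Suc i # path_between n i (Suc i) = [Suc i..<n] @ [0..<Suc i]"
      using assms(1) by (simp add: path_between_def upt_conv_Cons del: upt_Suc)
    then show ?thesis
      using u assms(1) walk_around[of i] wC_eq[of i] by (simp del: upt_Suc)
  qed
  then show "walk_in (Cpath n i) (u # path_between n i u)"
    "walk_weight W (u # path_between n i u) = wC n w i"
    by auto
  show "{..<n} \<subseteq> insert u (set (path_between n i u))"
    using assms(2) by (auto simp: path_between_def)
qed

lemma vmin_vmax_cases:
  "vmin n w i = i \<and> vmax n w i = Suc i \<or> vmin n w i = Suc i \<and> vmax n w i = i"
  by (simp add: vmin_def vmax_def)

lemma dC_vmin_plus_vmax: "Suc i < n \<Longrightarrow> dC n w i (vmin n w i) + dC n w i (vmax n w i) = wC n w i"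
  using vmin_vmax_cases[of i] dC_at_i[of i] dC_at_Suc_i[of i] wC_eq[of i] by auto

lemma explores_within_two_agents:
  assumes i: "Suc i < n"
  defines "a \<equiv> vmin n w i" and "b \<equiv> vmax n w i"
  shows "explores_within q ((Invoke # trav 0 (path_from0 n i a)) @ (Invoke # trav 1 (path_from0 n i b)))
           (2 * q + wC n w i)"
proof -
  have ab: "a = i \<or> a = Suc i" "b = i \<or> b = Suc i"
    using vmin_vmax_cases[of i] by (auto simp: a_def b_def)
  note A = walk_path_from0[OF i ab(1)] and B = walk_path_from0[OF i ab(2)]
  let ?V = "insert 0 (set (path_from0 n i a))"
  have "exec E W 0 q ([], 0, {}) (Invoke # trav 0 (path_from0 n i a)) = Some ([a], q + dC n w i a, ?V)"
    using exec_Invoke_trav[of E 0 "path_from0 n i a" W q "[]" 0 "{}"] A walk_in_mono[OF Cpath_subset]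
    by simp
  moreover have "exec E W 0 q ([a], q + dC n w i a, ?V) (Invoke # trav 1 (path_from0 n i b)) =
      Some ([a, b], q + dC n w i a + q + dC n w i b, insert 0 ?V \<union> set (path_from0 n i b))"
    using exec_Invoke_trav[of E 0 "path_from0 n i b" W q "[a]" "q + dC n w i a" ?V]
      B walk_in_mono[OF Cpath_subset]
    by simp
  ultimately have "run E W 0 q ((Invoke # trav 0 (path_from0 n i a)) @ (Invoke # trav 1 (path_from0 n i b))) =
      Some ([a, b], q + dC n w i a + q + dC n w i b, insert 0 ?V \<union> set (path_from0 n i b))"
    by (simp add: run_def exec_append)
  moreover have "{..<n} \<subseteq> insert 0 (set (path_from0 n i a) \<union> set (path_from0 n i b))"
    using vmin_vmax_cases[of i] path_from0_cover[of i] by (auto simp: a_def b_def)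
  moreover have "dC n w i a + dC n w i b = wC n w i"
    using dC_vmin_plus_vmax[OF i] by (simp add: a_def b_def)
  ultimately show ?thesis unfolding explores_within_def by auto
qed

lemma explores_within_one_agent:
  assumes i: "Suc i < n"
  defines "a \<equiv> vmin n w i"
  shows "explores_within q ((Invoke # trav 0 (path_from0 n i a)) @ trav 0 (path_between n i a))
           (q + dC n w i a + wC n w i)"
proof -
  have a: "a = i \<or> a = Suc i"
    using vmin_vmax_cases[of i] by (auto simp: a_def)
  note A = walk_path_from0[OF i a] and B = walk_path_between[OF i a]
  have "run E W 0 q ((Invoke # trav 0 (path_from0 n i a)) @ trav 0 (path_between n i a)) =
      Some ([last (a # path_between n i a)], q + dC n w i a + wC n w i,
            insert 0 (set (path_from0 n i a)) \<union> set (path_between n i a))"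
    using exec_Invoke_trav[of E 0 "path_from0 n i a" W q "[]" 0 "{}"]
      exec_trav[of 0 "[a]" E "path_between n i a" W 0 q] A B walk_in_mono[OF Cpath_subset]
    by (simp add: run_def exec_append)
  moreover have "a \<in> insert 0 (set (path_from0 n i a))"
    using A(3) last_in_set[of "0 # path_from0 n i a"] by simp
  ultimately show ?thesis using B(3) unfolding explores_within_def by auto
qed

lemma RingOffline_middle:
  assumes "0 < i" "Suc i < n"
  shows "explores_within q (RingOffline n w q i) (ccost n w q i)"
proof -
  have i: "i \<noteq> 0" "i \<noteq> n - 1" using assms by auto
  show ?thesis
  proof (cases "2 * q + wC n w i < q + dC n w i (vmin n w i) + wC n w i")
    case True
    then show ?thesis using i explores_within_two_agents[OF assms(2), of q]
      by (simp add: RingOffline_def ccost_def)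
  next
    case False
    then show ?thesis using i explores_within_one_agent[OF assms(2), of q]
      by (simp add: RingOffline_def ccost_def)
  qed
qed

lemma RingOffline_explores_within:
  assumes "istar < n"
  shows "explores_within q (RingOffline n w q istar) (ccost n w q istar)"
proof -
  consider "istar = 0" | "istar = n - 1" | "0 < istar" "Suc istar < n" using assms by linarith
  then show ?thesis using RingOffline_first RingOffline_last RingOffline_middle by cases auto
qed

subsection \<open>Every exploring strategy costs at least some \<open>c_j\<close>\<close>

lemma L_pos: "0 < L"
  using coord_mono[of 1 n] weight_pos[of 0] three_le by simp

definition lifts :: "nat \<Rightarrow> real \<Rightarrow> bool" where
  "lifts v x \<longleftrightarrow> (\<exists>z::int. x = coord v + of_int z * L)"

lemma lifts_Suc_mod: "t < n \<Longrightarrow> lifts (Suc t mod n) x \<longleftrightarrow> lifts t (x - w t)"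
proof (cases "Suc t < n")
  case True
  then show ?thesis by (simp add: lifts_def algebra_simps)
next
  case False
  assume "t < n"
  then have "Suc t = n" using False by simp
  then have t: "t = n - 1" "Suc t mod n = 0" by auto
  have "(\<exists>z::int. x = of_int z * L) \<longleftrightarrow> (\<exists>z::int. x - w t = coord t + of_int z * L)"
  proof
    assume "\<exists>z::int. x = of_int z * L"
    then obtain z :: int where "x = of_int z * L" ..
    then show "\<exists>z::int. x - w t = coord t + of_int z * L"
      using t L_eq_last by (intro exI[of _ "z - 1"]) (simp add: algebra_simps)
  next
    assume "\<exists>z::int. x - w t = coord t + of_int z * L"
    then obtain z :: int where "x - w t = coord t + of_int z * L" ..
    then show "\<exists>z::int. x = of_int z * L"
      using t L_eq_last by (intro exI[of _ "z + 1"]) (simp add: algebra_simps)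
  qed
  then show ?thesis using t by (simp add: lifts_def)
qed

lemma lifts_ring_edge:
  assumes "{u, v} \<in> E" "lifts u x"
  shows "\<exists>x'. lifts v x' \<and> \<bar>x' - x\<bar> = W {u, v}"
proof -
  obtain t where t: "t < n" "{u, v} = {t, Suc t mod n}"
    using assms(1) by (auto simp: ring_edges_def ring_edge_def)
  then have W: "W {u, v} = w t" using ring_W_ring_edge by (simp add: ring_edge_def)
  from t(2) consider "u = t" "v = Suc t mod n" | "u = Suc t mod n" "v = t"
    by (auto simp: doubleton_eq_iff)
  then show ?thesis
  proof cases
    case 1
    then show ?thesis using assms(2) t(1) W weight_pos[of t]
      by (intro exI[of _ "x + w t"]) (simp add: lifts_Suc_mod)
  next
    case 2
    then show ?thesis using assms(2) t(1) W weight_pos[of t]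
      by (intro exI[of _ "x - w t"]) (simp add: lifts_Suc_mod)
  qed
qed

text \<open>\<open>P\<close> lists the lifted positions of the agents. The two cost bounds survive each move
  because moving one lifted endpoint by \<open>d\<close> changes \<open>hi - lo\<close> and \<open>2 (hi - lo) - |p|\<close> by at
  most \<open>d\<close>, and each invocation pays \<open>q\<close>.\<close>

definition lifted_cost_inv :: "real \<Rightarrow> nat list \<Rightarrow> real \<Rightarrow> nat set \<Rightarrow> bool" where
  "lifted_cost_inv q pos c vis \<longleftrightarrow> (vis \<noteq> {} \<longrightarrow> pos \<noteq> []) \<and>
     (\<exists>P lo (hi :: real). list_all2 lifts pos P \<and> set P \<subseteq> {lo..hi} \<and> lo \<le> 0 \<and> 0 \<le> hi \<and>
        (\<forall>v\<in>vis. \<exists>x\<in>{lo..hi}. lifts v x) \<and>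
        hi - lo \<le> c - real (length pos) * q \<and>
        2 * (hi - lo) - sum_list (map abs P) \<le> c - real (length pos) * q)"

lemma lifted_cost_invI:
  assumes "vis \<noteq> {} \<longrightarrow> pos \<noteq> []" "list_all2 lifts pos P" "set P \<subseteq> {lo..hi}" "lo \<le> 0" "0 \<le> hi"
    "\<forall>v\<in>vis. \<exists>x\<in>{lo..hi}. lifts v x" "hi - lo \<le> c - real (length pos) * q"
    "2 * (hi - lo) - sum_list (map abs P) \<le> c - real (length pos) * q"
  shows "lifted_cost_inv q pos c vis"
  using assms unfolding lifted_cost_inv_def by blast

lemma lifted_cost_invE:
  assumes "lifted_cost_inv q pos c vis"
  obtains P lo hi where "vis \<noteq> {} \<longrightarrow> pos \<noteq> []" "list_all2 lifts pos P" "set P \<subseteq> {lo..hi}"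
    "lo \<le> 0" "0 \<le> hi" "\<forall>v\<in>vis. \<exists>x\<in>{lo..hi}. lifts v x" "hi - lo \<le> c - real (length pos) * q"
    "2 * (hi - lo) - sum_list (map abs P) \<le> c - real (length pos) * q"
  using assms unfolding lifted_cost_inv_def by blast

lemma lifted_cost_inv_init: "lifted_cost_inv q [] 0 {}"
  by (rule lifted_cost_invI[where P = "[]" and lo = 0 and hi = 0]) auto

lemma lifted_cost_inv_Invoke:
  assumes "lifted_cost_inv q pos c vis"
  shows "lifted_cost_inv q (pos @ [0]) (c + q) (insert 0 vis)"
proof -
  obtain P lo hi where I: "list_all2 lifts pos P" "set P \<subseteq> {lo..hi}" "lo \<le> 0" "0 \<le> hi"
    "\<forall>v\<in>vis. \<exists>x\<in>{lo..hi}. lifts v x" "hi - lo \<le> c - real (length pos) * q"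
    "2 * (hi - lo) - sum_list (map abs P) \<le> c - real (length pos) * q"
    using assms by (rule lifted_cost_invE)
  have "lifts 0 0" by (auto simp: lifts_def intro: exI[of _ 0])
  then have all2: "list_all2 lifts (pos @ [0]) (P @ [0])" using I(1) by (simp add: list_all2_appendI)
  have len: "real (length (pos @ [0])) * q = real (length pos) * q + q"
    by (simp add: algebra_simps)
  show ?thesis
  proof (rule lifted_cost_invI[OF _ all2])
    show "\<forall>v\<in>insert 0 vis. \<exists>x\<in>{lo..hi}. lifts v x"
      using I(3-5) \<open>lifts 0 0\<close> by auto
  qed (use I len in simp_all)
qed

lemma lifted_cost_inv_Traverse:
  assumes inv: "lifted_cost_inv q pos c vis" and j: "j < length pos" and e: "{pos ! j, v} \<in> E"
  shows "lifted_cost_inv q (pos[j := v]) (c + W {pos ! j, v}) (insert v vis)"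
proof -
  obtain P lo hi where I: "list_all2 lifts pos P" "set P \<subseteq> {lo..hi}" "lo \<le> 0" "0 \<le> hi"
    "\<forall>v\<in>vis. \<exists>x\<in>{lo..hi}. lifts v x" "hi - lo \<le> c - real (length pos) * q"
    "2 * (hi - lo) - sum_list (map abs P) \<le> c - real (length pos) * q"
    using inv by (rule lifted_cost_invE)
  define p where "p = P ! j"
  have jP: "j < length P" using I(1) j by (simp add: list_all2_lengthD)
  have p: "lifts (pos ! j) p" "lo \<le> p" "p \<le> hi"
    using I(1,2) j nth_mem[OF jP] by (auto simp: p_def list_all2_nthD)
  obtain p' where p': "lifts v p'" "\<bar>p' - p\<bar> = W {pos ! j, v}"
    using lifts_ring_edge[OF e p(1)] by blast
  define lo' where "lo' = min lo p'"
  define hi' where "hi' = max hi p'"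
  have all2: "list_all2 lifts (pos[j := v]) (P[j := p'])"
    using I(1) p'(1) by (simp add: list_all2_update_cong)
  have range: "set (P[j := p']) \<subseteq> {lo'..hi'}"
    using I(2) set_update_subset_insert[of P j p'] by (fastforce simp: lo'_def hi'_def)
  have visited: "\<forall>u\<in>insert v vis. \<exists>x\<in>{lo'..hi'}. lifts u x"
    using I(5) p'(1) by (fastforce simp: lo'_def hi'_def)
  have sum: "sum_list (map abs (P[j := p'])) = sum_list (map abs P) - \<bar>p\<bar> + \<bar>p'\<bar>"
    using jP by (simp add: map_update sum_list_list_update p_def)
  show ?thesis
  proof (rule lifted_cost_invI[OF _ all2 range _ _ visited])
    have "hi' - lo' \<le> hi - lo + \<bar>p' - p\<bar>"
      using p(2,3) by (auto simp: lo'_def hi'_def)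
    then show "hi' - lo' \<le> c + W {pos ! j, v} - real (length (pos[j := v])) * q"
      using I(6) p'(2) by simp
    have "2 * (hi' - lo') - \<bar>p'\<bar> \<le> 2 * (hi - lo) - \<bar>p\<bar> + \<bar>p' - p\<bar>"
      using p(2,3) I(3,4) by (auto simp: lo'_def hi'_def)
    then show "2 * (hi' - lo') - sum_list (map abs (P[j := p'])) \<le>
        c + W {pos ! j, v} - real (length (pos[j := v])) * q"
      using I(7) p'(2) sum by simp
  qed (use I(3,4) j in \<open>auto simp: lo'_def hi'_def\<close>)
qed

lemma lifted_cost_inv_step:
  "lifted_cost_inv q pos c vis \<Longrightarrow> step E W 0 q (pos, c, vis) m = Some (pos', c', vis') \<Longrightarrow>
   lifted_cost_inv q pos' c' vis'"
  by (cases m) (auto split: if_splits intro: lifted_cost_inv_Invoke lifted_cost_inv_Traverse)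

lemma lifted_cost_inv_exec:
  "lifted_cost_inv q pos c vis \<Longrightarrow> exec E W 0 q (pos, c, vis) S = Some (pos', c', vis') \<Longrightarrow>
   lifted_cost_inv q pos' c' vis'"
proof (induction S arbitrary: pos c vis)
  case (Cons m S)
  then obtain pos1 c1 vis1 where "step E W 0 q (pos, c, vis) m = Some (pos1, c1, vis1)"
    and "exec E W 0 q (pos1, c1, vis1) S = Some (pos', c', vis')"
    by (auto split: option.splits)
  then show ?case using Cons lifted_cost_inv_step by blast
qed simp

lemma lifted_interval_gap:
  assumes "lo \<le> 0" "0 \<le> hi" and lifted: "\<forall>v<n. \<exists>x\<in>{lo..hi}. lifts v x"
  shows "\<exists>j<n. coord j \<le> hi \<and> L - coord (Suc j) \<le> - lo"
proof -
  define j where "j = Max {v. v < n \<and> coord v \<le> hi}"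
  have "j \<in> {v. v < n \<and> coord v \<le> hi}"
    unfolding j_def by (rule Max_in) (use assms(2) three_le in \<open>auto intro!: exI[of _ 0]\<close>)
  then have j: "j < n" "coord j \<le> hi" by auto
  have "L - coord (Suc j) \<le> - lo"
  proof (cases "Suc j < n")
    case True
    have above: "hi < coord (Suc j)"
    proof (rule ccontr)
      assume "\<not> hi < coord (Suc j)"
      then have "Suc j \<le> Max {v. v < n \<and> coord v \<le> hi}" using True by (intro Max_ge) auto
      then show False by (simp add: j_def[symmetric])
    qed
    obtain z :: int where z: "lo \<le> coord (Suc j) + of_int z * L" "coord (Suc j) + of_int z * L \<le> hi"
      using lifted[rule_format, OF True] unfolding lifts_def by auto
    have "z < 0"
    proof (rule ccontr)
      assume "\<not> z < 0"
      then have "0 \<le> of_int z * L" using L_pos by simp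
      then show False using z(2) above by linarith
    qed
    then have "of_int z * L \<le> - L"
      using mult_right_mono[of "of_int z" "-1" L] L_pos by simp
    then show ?thesis using z by linarith
  next
    case False
    then have "Suc j = n" using j(1) by simp
    then show ?thesis using assms(1) by simp
  qed
  then show ?thesis using j by blast
qed

lemma ccost_le_of_bounds:
  assumes j: "j < n" and q: "0 \<le> q" and k: "1 \<le> k" and several: "real k * q + wC n w j \<le> c"
    and single: "k = 1 \<Longrightarrow> q + wC n w j + min (coord j) (L - coord (Suc j)) \<le> c"
  shows "ccost n w q j \<le> c"
proof (cases "j = 0 \<or> j = n - 1")
  case True
  then show ?thesis using several k q mult_right_mono[of 1 "real k" q]
    by (simp add: ccost_def)
next
  case False
  then have "Suc j < n" using j by auto
  then have "dC n w j (vmin n w j) = min (coord j) (L - coord (Suc j))"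
    using dC_at_i[of j] dC_at_Suc_i[of j] by (simp add: vmin_def min_def)
  moreover have "k = 1 \<or> 2 * q \<le> real k * q"
    using k q mult_right_mono[of 2 "real k" q] by linarith
  ultimately show ?thesis using False several single by (auto simp: ccost_def)
qed

lemma ccost_le_lifted_cost:
  assumes q: "0 \<le> q" and inv: "lifted_cost_inv q pos c vis" and covered: "{..<n} \<subseteq> vis"
  shows "\<exists>j<n. ccost n w q j \<le> c"
proof -
  obtain P lo hi where I: "vis \<noteq> {} \<longrightarrow> pos \<noteq> []" "list_all2 lifts pos P" "set P \<subseteq> {lo..hi}"
    "lo \<le> 0" "0 \<le> hi" "\<forall>v\<in>vis. \<exists>x\<in>{lo..hi}. lifts v x" "hi - lo \<le> c - real (length pos) * q"
    "2 * (hi - lo) - sum_list (map abs P) \<le> c - real (length pos) * q"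
    using inv by (rule lifted_cost_invE)
  obtain j where j: "j < n" "coord j \<le> hi" "L - coord (Suc j) \<le> - lo"
    using lifted_interval_gap[OF I(4,5)] I(6) covered by blast
  have wC: "wC n w j = coord j + (L - coord (Suc j))" using wC_eq[OF j(1)] by simp
  have "0 \<in> vis" using covered three_le by auto
  then have "pos \<noteq> []" using I(1) by auto
  then have k: "1 \<le> length pos" by (simp add: Suc_le_eq)
  show ?thesis
  proof (intro exI conjI)
    show "ccost n w q j \<le> c"
    proof (rule ccost_le_of_bounds[OF j(1) q k])
      show "real (length pos) * q + wC n w j \<le> c" using I(7) j(2,3) wC by linarith
    next
      assume "length pos = 1"
      then obtain p where P: "P = [p]" using list_all2_lengthD[OF I(2)] by (auto simp: length_Suc_conv)
      then have "lo \<le> p" "p \<le> hi" using I(3) by auto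
      then have "hi - lo + min hi (- lo) \<le> 2 * (hi - lo) - sum_list (map abs P)"
        using P by (auto simp: abs_if min_def)
      moreover have "min (coord j) (L - coord (Suc j)) \<le> min hi (- lo)"
        using j(2,3) by (rule min.mono)
      ultimately show "q + wC n w j + min (coord j) (L - coord (Suc j)) \<le> c"
        using I(8) j(2,3) wC \<open>length pos = 1\<close> by simp
    qed
  qed (rule j(1))
qed

lemma explores_ccost_le:
  assumes "0 \<le> q" "explores {..<n} E W 0 q S"
  shows "\<exists>j<n. ccost n w q j \<le> strat_cost E W 0 q S"
proof -
  obtain pos c vis where run: "run E W 0 q S = Some (pos, c, vis)" and "{..<n} \<subseteq> vis"
    using assms(2) unfolding explores_def by blast
  moreover have "lifted_cost_inv q pos c vis"
    using lifted_cost_inv_exec[OF lifted_cost_inv_init run[unfolded run_def]] .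
  ultimately show ?thesis using ccost_le_lifted_cost[OF assms(1)] by (simp add: strat_cost_def)
qed

end

theorem mainTheorem1:
  fixes n :: nat and w :: "nat \<Rightarrow> real" and q :: real and istar :: nat
  assumes "n \<ge> 3"
    and "\<forall>i<n. w i > 0"
    and "q \<ge> 0"
    and "istar < n"
    and "\<forall>i<n. ccost n w q istar \<le> ccost n w q i"
  shows "explores {..<n} (ring_edges n) (ring_W n w) 0 q (RingOffline n w q istar)
       \<and> cost_optimal {..<n} (ring_edges n) (ring_W n w) 0 q (RingOffline n w q istar)"
proof -
  interpret weighted_ring n w using assms(1,2) by unfold_locales auto
  obtain pos c vis where run: "run E W 0 q (RingOffline n w q istar) = Some (pos, c, vis)"
    and covered: "{..<n} \<subseteq> vis" and cost: "c \<le> ccost n w q istar"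
    using RingOffline_explores_within[OF assms(4)] unfolding explores_within_def by blast
  have "explores {..<n} E W 0 q (RingOffline n w q istar)"
    unfolding explores_def using run covered by blast
  moreover have "strat_cost E W 0 q (RingOffline n w q istar) \<le> strat_cost E W 0 q S"
    if "explores {..<n} E W 0 q S" for S
    using explores_ccost_le[OF assms(3) that] run cost assms(5) by (force simp: strat_cost_def)
  ultimately show ?thesis unfolding cost_optimal_def by blast
qed

end
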